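(* Fix $t\ge 0$. Let $\sigma=\{x_1,\dots,x_m\}\subseteq\mathcal C$ and $\tau=\{y_1,\dots,y_n\}\subseteq\mathcal Y^\circ$ be finite subsets, and set $A:=\max_i r_{\mathcal C}(x_i)$, $B:=\max_j r_{\mathcal Y}(y_j)$. Then $\sigma\cup\tau$ is a simplex of the intrinsic Čech complex $\check{C}_t(\mathcal X,d_\theta)$ if and only if at least one of the following holds: (C) there exists $z\in\mathcal C$ with $z\in\bigcap_{i=1}^m \overline{B}_{\mathcal C}(x_i,t)$ and $\|(r_{\mathcal C}(z),B)\|_{\ell^p}\le t$; (Y) there exists $w\in\mathcal Y$ with $w\in\bigcap_{j=1}^n \overline{B}_{\mathcal Y}(y_j,t)$ and $\|(A,r_{\mathcal Y}(w))\|_{\ell^p}\le t$.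
   Context: Let $A$ be a unital $C^*$-algebra, $H$ a Hilbert space, $\mathcal X=\mathrm{CB}(A,B(H))$, $\mathcal C=\mathrm{CP}(A,B(H))$ with Bures distance $\beta$. Fix $\theta\in\mathcal C$, $\lambda>0$, $\alpha\in(0,1]$, $p\in[1,\infty]$, and let $d_\theta=\beta^{BK}_{\theta,\lambda,p,\alpha}$ be the Bures--Kuratowski metric. Let $\mathcal Y=(\mathcal X\setminus\mathcal C)\sqcup\{\ast\}$ with metric $d_{\mathrm{reg}}$ ($=\lambda\delta_{\mathrm{reg}}^\alpha$ on non-CP pairs and $\lambda\delta_{\mathrm{reg}}(\cdot,0)^\alpha$ to $\ast$, $\delta_{\mathrm{reg}}$ the regular-representation metric), $\mathcal Y^\circ=\mathcal Y\setminus\{\ast\}$. Then $(\mathcal X,d_\theta)$ is the $\ell^p$ wedge of $(\mathcal C,\beta,\theta)$ and $(\mathcal Y,d_{\mathrm{reg}},\ast)$ with $\theta\sim\ast$: $d_\theta=\beta$ on $\mathcal C$, $d_\theta=d_{\mathrm{reg}}$ on $\mathcal Y$, and $d_\theta(x,y)=\|(r_{\mathcal C}(x),r_{\mathcal Y}(y))\|_{\ell^p}$ for $x\in\mathcal C$, $y\in\mathcal Y$, where $r_{\mathcal C}(x)=\beta(x,\theta)$, $r_{\mathcal Y}(y)=d_{\mathrm{reg}}(y,\ast)$. $\overline{B}_{\mathcal C}$, $\overline{B}_{\mathcal Y}$ are closed balls in $(\mathcal C,\beta)$, $(\mathcal Y,d_{\mathrm{reg}})$. The intrinsic Čech complex $\check{C}_t(Z,d)$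 of a metric space is the nerve of its closed radius-$t$ balls: a finite $\sigma\subseteq Z$ is a simplex iff $\bigcap_{z\in\sigma}\overline{B}_Z(z,t)\neq\varnothing$. *)

theory Defs
  imports "HOL-Analysis.Analysis"
begin

definition lp_norm2 :: "ereal \<Rightarrow> real \<Rightarrow> real \<Rightarrow> real" where
  "lp_norm2 p a b =
     (if p = \<infinity> then max \<bar>a\<bar> \<bar>b\<bar>
      else (\<bar>a\<bar> powr real_of_ereal p + \<bar>b\<bar> powr real_of_ereal p) powr (1 / real_of_ereal p))"

text \<open>Carrier of the wedge X = C \<squnion> Y\<degree>, where Y\<degree> = Y - {star}; the basepoint theta of C
  is identified with star.\<close>
definition wedge_carrier :: "'a set \<Rightarrow> 'b set \<Rightarrow> 'b \<Rightarrow> ('a + 'b) set" where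
  "wedge_carrier C Y star = Inl ` C \<union> Inr ` (Y - {star})"

fun wedge_dist :: "ereal \<Rightarrow> ('a \<Rightarrow> 'a \<Rightarrow> real) \<Rightarrow> 'a \<Rightarrow> ('b \<Rightarrow> 'b \<Rightarrow> real) \<Rightarrow> 'b
                   \<Rightarrow> ('a + 'b) \<Rightarrow> ('a + 'b) \<Rightarrow> real" where
  "wedge_dist p dC theta dY star (Inl x) (Inl y) = dC x y"
| "wedge_dist p dC theta dY star (Inr x) (Inr y) = dY x y"
| "wedge_dist p dC theta dY star (Inl x) (Inr y) = lp_norm2 p (dC x theta) (dY y star)"
| "wedge_dist p dC theta dY star (Inr y) (Inl x) = lp_norm2 p (dC x theta) (dY y star)"

definition cech_simplex :: "'a set \<Rightarrow> ('a \<Rightarrow> 'a \<Rightarrow> real) \<Rightarrow> real \<Rightarrow> 'a set \<Rightarrow> bool" where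
  "cech_simplex Z d t S \<longleftrightarrow> finite S \<and> S \<subseteq> Z \<and>
     (\<exists>w\<in>Z. \<forall>s\<in>S. w \<in> Metric_space.mcball Z d s t)"

end

theory Submission
  imports Defs
begin

text \<open>
  For a common point z in C, the distances to the points y of \<tau> are the l^p norms
  of (dC z theta, dY y star); these are monotone in the second entry, so they are all at most t
  iff the one for the point of \<tau> farthest from star is, which is condition (C); symmetrically
  for (Y).  Condition (Y) also admits w = star, which is not a point of the wedge, but then
  theta (identified with star) witnesses (C).  That the closed balls are those of a metric
  space rests on Minkowski's inequality for the l^p norm of pairs.
\<close>

lemma lp_norm2_real:
  "lp_norm2 (ereal q) a b = (\<bar>a\<bar> powr q + \<bar>b\<bar> powr q) powr (1 / q)"
  by (simp add: lp_norm2_def)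

lemma lp_norm2_nonneg [simp]: "0 \<le> lp_norm2 p a b"
  unfolding lp_norm2_def by auto

lemma lp_norm2_commute: "lp_norm2 p a b = lp_norm2 p b a"
  unfolding lp_norm2_def by (auto simp: add.commute max.commute)

lemma lp_norm2_zero_right:
  assumes "p \<ge> 1"
  shows "lp_norm2 p a 0 = \<bar>a\<bar>"
proof (cases p)
  case (real q)
  with assms show ?thesis by (simp add: lp_norm2_real powr_powr)
qed (use assms in \<open>auto simp: lp_norm2_def\<close>)

lemma lp_norm2_zero_left: "p \<ge> 1 \<Longrightarrow> lp_norm2 p 0 b = \<bar>b\<bar>"
  by (simp add: lp_norm2_commute[of p 0] lp_norm2_zero_right)

lemma lp_norm2_mono:
  assumes "p \<ge> 1" "\<bar>a\<bar> \<le> \<bar>a'\<bar>" "\<bar>b\<bar> \<le> \<bar>b'\<bar>"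
  shows "lp_norm2 p a b \<le> lp_norm2 p a' b'"
proof (cases p)
  case (real q)
  with assms have "\<bar>a\<bar> powr q + \<bar>b\<bar> powr q \<le> \<bar>a'\<bar> powr q + \<bar>b'\<bar> powr q"
    by (intro add_mono powr_mono2) auto
  with real assms show ?thesis
    unfolding real lp_norm2_real by (intro powr_mono2) auto
qed (use assms in \<open>auto simp: lp_norm2_def\<close>)

lemma lp_norm2_ge_left: "p \<ge> 1 \<Longrightarrow> \<bar>a\<bar> \<le> lp_norm2 p a b"
  using lp_norm2_mono[of p a a 0 b] by (simp add: lp_norm2_zero_right)

lemma lp_norm2_ge_right: "p \<ge> 1 \<Longrightarrow> \<bar>b\<bar> \<le> lp_norm2 p a b"
  using lp_norm2_ge_left[of p b a] by (simp add: lp_norm2_commute)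

lemma lp_norm2_Max_right_le_iff:
  assumes "p \<ge> 1" "finite S" "S \<noteq> {}" "\<And>s. s \<in> S \<Longrightarrow> g s \<ge> 0"
  shows "lp_norm2 p a (Max (g ` S)) \<le> t \<longleftrightarrow> (\<forall>s\<in>S. lp_norm2 p a (g s) \<le> t)"
proof
  assume Max_le: "lp_norm2 p a (Max (g ` S)) \<le> t"
  show "\<forall>s\<in>S. lp_norm2 p a (g s) \<le> t"
  proof
    fix s assume "s \<in> S"
    then have "g s \<le> Max (g ` S)" using assms(2) by simp
    with assms(4)[OF \<open>s \<in> S\<close>] have "lp_norm2 p a (g s) \<le> lp_norm2 p a (Max (g ` S))"
      by (intro lp_norm2_mono[OF assms(1)]) auto
    with Max_le show "lp_norm2 p a (g s) \<le> t" by linarith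
  qed
next
  assume "\<forall>s\<in>S. lp_norm2 p a (g s) \<le> t"
  moreover have "Max (g ` S) \<in> g ` S" using assms(2,3) by simp
  ultimately show "lp_norm2 p a (Max (g ` S)) \<le> t" by (metis imageE)
qed

lemma lp_norm2_Max_left_le_iff:
  assumes "p \<ge> 1" "finite S" "S \<noteq> {}" "\<And>s. s \<in> S \<Longrightarrow> g s \<ge> 0"
  shows "lp_norm2 p (Max (g ` S)) b \<le> t \<longleftrightarrow> (\<forall>s\<in>S. lp_norm2 p (g s) b \<le> t)"
  using lp_norm2_Max_right_le_iff[OF assms, where a = b and t = t]
  by (simp only: lp_norm2_commute[of p b])

lemma convex_on_powr_nonneg:
  fixes q :: real
  assumes "q \<ge> 1"
  shows "convex_on {0..} (\<lambda>x. x powr q)"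
proof (rule convex_on_linorderI)
  fix t x y :: real
  assume t: "0 < t" "t < 1" and "x \<in> {0..}" "y \<in> {0..}" "x < y"
  show "((1 - t) *\<^sub>R x + t *\<^sub>R y) powr q \<le> (1 - t) * x powr q + t * y powr q"
  proof (cases "x = 0")
    case True
    have "t powr q \<le> t"
      using powr_mono'[of 1 q t] assms t by simp
    with \<open>y \<in> {0..}\<close> have "t powr q * y powr q \<le> t * y powr q"
      by (intro mult_right_mono) auto
    with True t \<open>y \<in> {0..}\<close> show ?thesis by (simp add: powr_mult)
  next
    case False
    with \<open>x \<in> {0..}\<close> \<open>x < y\<close> t show ?thesis
      using convex_onD[OF powr_convex[OF assms], of t x y] by simp
  qed
qed simp

lemma lp_norm2_triangle:
  assumes "p \<ge> 1" and nonneg: "0 \<le> a" "0 \<le> b" "0 \<le> a'" "0 \<le> b'"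
  shows "lp_norm2 p (a + a') (b + b') \<le> lp_norm2 p a b + lp_norm2 p a' b'"
proof (cases p)
  case (real q)
  with assms have q: "q \<ge> 1" by simp
  have norm_powr: "lp_norm2 p x y powr q = \<bar>x\<bar> powr q + \<bar>y\<bar> powr q" for x y
    using real q by (simp add: lp_norm2_real powr_powr)
  define n n' where "n = lp_norm2 p a b" and "n' = lp_norm2 p a' b'"
  consider "n = 0" | "n' = 0" | "n > 0" "n' > 0"
    using lp_norm2_nonneg[of p] unfolding n_def n'_def by (metis order_le_less)
  then show ?thesis
  proof cases
    case 1
    with nonneg lp_norm2_ge_left[OF assms(1), of a b] lp_norm2_ge_right[OF assms(1), of b a]
    have "a = 0" "b = 0" by (auto simp: n_def n'_def)
    then show ?thesis by simp
  next
    case 2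
    with nonneg lp_norm2_ge_left[OF assms(1), of a' b'] lp_norm2_ge_right[OF assms(1), of b' a']
    have "a' = 0" "b' = 0" by (auto simp: n_def n'_def)
    then show ?thesis by simp
  next
    case 3
    define s where "s = n + n'"
    have "s > 0" "n \<le> s" using 3 by (simp_all add: s_def)
    text \<open>The point ((a + a')/s, (b + b')/s) is a convex combination of the unit vectors
      (a/n, b/n) and (a'/n', b'/n').\<close>
    have convex_step: "((x + x') / s) powr q \<le> n / s * (x / n) powr q + n' / s * (x' / n') powr q"
      if "0 \<le> x" "0 \<le> x'" for x x'
    proof -
      have "1 - n / s = n' / s"
        using \<open>s > 0\<close> by (simp add: s_def field_simps)
      moreover have "(x + x') / s = (n' / s) * (x' / n') + (n / s) * (x / n)"
        using 3 by (simp add: add_divide_distrib add.commute)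
      ultimately show ?thesis
        using convex_onD[OF convex_on_powr_nonneg[OF q], of "n / s" "x' / n'" "x / n"] that 3 \<open>s > 0\<close> \<open>n \<le> s\<close>
        by (simp add: add.commute)
    qed
    have unit: "(x / m) powr q + (y / m) powr q = 1"
      if "0 \<le> x" "0 \<le> y" "m = lp_norm2 p x y" "m > 0" for x y m
    proof -
      have "m powr q = x powr q + y powr q"
        using that norm_powr[of x y] by simp
      moreover have "m powr q > 0"
        using \<open>m > 0\<close> by simp
      moreover have "(x / m) powr q + (y / m) powr q = (x powr q + y powr q) / m powr q"
        using that by (simp add: powr_divide add_divide_distrib)
      ultimately show ?thesis by simp
    qed
    have "((a + a') / s) powr q + ((b + b') / s) powr q
          \<le> n / s * ((a / n) powr q + (b / n) powr q) + n' / s * ((a' / n') powr q + (b' / n') powr q)"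
      using convex_step[of a a'] convex_step[of b b'] nonneg by (simp add: algebra_simps)
    also have "\<dots> = 1"
      using unit[of a b n] unit[of a' b' n'] nonneg 3 \<open>s > 0\<close>
      by (simp add: n_def n'_def s_def add_divide_distrib[symmetric])
    finally have "lp_norm2 p (a + a') (b + b') powr q \<le> s powr q"
      using nonneg \<open>s > 0\<close> by (simp add: norm_powr powr_divide add_divide_distrib[symmetric])
    then have "lp_norm2 p (a + a') (b + b') \<le> s"
      using powr_less_mono2[of q s "lp_norm2 p (a + a') (b + b')"] q \<open>s > 0\<close> by fastforce
    then show ?thesis by (simp add: s_def n_def n'_def)
  qed
qed (use assms in \<open>auto simp: lp_norm2_def\<close>)

lemma lp_norm2_le_add_left:
  assumes "p \<ge> 1" "0 \<le> u" "u \<le> v + e" "0 \<le> v" "0 \<le> e" "0 \<le> w"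
  shows "lp_norm2 p u w \<le> e + lp_norm2 p v w"
proof -
  have "lp_norm2 p u w \<le> lp_norm2 p (v + e) (w + 0)"
    using assms by (intro lp_norm2_mono) auto
  also have "\<dots> \<le> lp_norm2 p v w + lp_norm2 p e 0"
    using assms by (intro lp_norm2_triangle) auto
  finally show ?thesis
    using assms by (simp add: lp_norm2_zero_right)
qed

lemma lp_norm2_le_add_right:
  assumes "p \<ge> 1" "0 \<le> u" "u \<le> v + e" "0 \<le> v" "0 \<le> e" "0 \<le> w"
  shows "lp_norm2 p w u \<le> e + lp_norm2 p w v"
  using lp_norm2_le_add_left[OF assms] by (simp add: lp_norm2_commute[of p w])

lemma Inl_in_wedge_carrier_iff [simp]: "Inl x \<in> wedge_carrier C Y star \<longleftrightarrow> x \<in> C"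
  and Inr_in_wedge_carrier_iff [simp]: "Inr y \<in> wedge_carrier C Y star \<longleftrightarrow> y \<in> Y \<and> y \<noteq> star"
  unfolding wedge_carrier_def by auto

lemma Metric_space_wedge:
  assumes "Metric_space C dC" "theta \<in> C" "Metric_space Y dY" "star \<in> Y" "p \<ge> 1"
  shows "Metric_space (wedge_carrier C Y star) (wedge_dist p dC theta dY star)"
proof
  interpret C: Metric_space C dC by fact
  interpret Y: Metric_space Y dY by fact
  let ?W = "wedge_carrier C Y star" and ?d = "wedge_dist p dC theta dY star"
  fix x y z
  show "0 \<le> ?d x y"
    by (cases x; cases y) auto
  show "?d x y = ?d y x"
    by (cases x; cases y) (auto simp: C.commute Y.commute)
  have mixed_nonzero: "lp_norm2 p (dC a theta) (dY b star) \<noteq> 0" if "b \<in> Y" "b \<noteq> star" for a b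
  proof -
    have "0 < dY b star"
      using that \<open>star \<in> Y\<close> Y.nonneg[of b star] Y.zero[of b star] by linarith
    also have "\<dots> \<le> lp_norm2 p (dC a theta) (dY b star)"
      using abs_ge_self[of "dY b star"] lp_norm2_ge_right[OF \<open>p \<ge> 1\<close>, of "dY b star" "dC a theta"] by linarith
    finally show ?thesis by simp
  qed
  show "?d x y = 0 \<longleftrightarrow> x = y" if "x \<in> ?W" "y \<in> ?W"
    using that by (cases x; cases y) (simp_all add: C.zero Y.zero mixed_nonzero)
  have shift_C: "lp_norm2 p (dC x theta) r \<le> dC x z + lp_norm2 p (dC z theta) r"
    if "x \<in> C" "z \<in> C" "0 \<le> r" for x z r
    using that \<open>theta \<in> C\<close> C.triangle[of x z theta]
    by (intro lp_norm2_le_add_left[OF \<open>p \<ge> 1\<close>]) auto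
  have shift_Y: "lp_norm2 p s (dY y star) \<le> dY y w + lp_norm2 p s (dY w star)"
    if "y \<in> Y" "w \<in> Y" "0 \<le> s" for y w s
    using that \<open>star \<in> Y\<close> Y.triangle[of y w star]
    by (intro lp_norm2_le_add_right[OF \<open>p \<ge> 1\<close>]) auto
  have shift_C_sym: "lp_norm2 p (dC x theta) r \<le> lp_norm2 p (dC z theta) r + dC z x"
    if "x \<in> C" "z \<in> C" "0 \<le> r" for x z r
    using shift_C[OF that] C.commute[of z x] by simp
  have shift_Y_sym: "lp_norm2 p s (dY y star) \<le> lp_norm2 p s (dY w star) + dY w y"
    if "y \<in> Y" "w \<in> Y" "0 \<le> s" for y w s
    using shift_Y[OF that] Y.commute[of w y] by simp
  have via_C: "dC x z \<le> lp_norm2 p (dC x theta) r + lp_norm2 p (dC z theta) r'"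
    if "x \<in> C" "z \<in> C" for x z r r'
    using C.triangle[OF that(1) \<open>theta \<in> C\<close> that(2)] C.commute[of theta z]
      lp_norm2_ge_left[OF \<open>p \<ge> 1\<close>, of "dC x theta" r] lp_norm2_ge_left[OF \<open>p \<ge> 1\<close>, of "dC z theta" r']
    by simp
  have via_Y: "dY y w \<le> lp_norm2 p s (dY y star) + lp_norm2 p s' (dY w star)"
    if "y \<in> Y" "w \<in> Y" for y w s s'
    using Y.triangle[OF that(1) \<open>star \<in> Y\<close> that(2)] Y.commute[of star w]
      lp_norm2_ge_right[OF \<open>p \<ge> 1\<close>, of "dY y star" s] lp_norm2_ge_right[OF \<open>p \<ge> 1\<close>, of "dY w star" s']
    by simp
  show "?d x z \<le> ?d x y + ?d y z" if "x \<in> ?W" "y \<in> ?W" "z \<in> ?W"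
    using that
    by (cases x; cases y; cases z)
      (auto simp: C.nonneg Y.nonneg
        intro: C.triangle Y.triangle shift_C shift_C_sym shift_Y shift_Y_sym via_C via_Y)
qed

lemma (in Metric_space) cech_simplex_iff:
  "cech_simplex M d t S \<longleftrightarrow> finite S \<and> S \<subseteq> M \<and> (\<exists>w\<in>M. \<forall>s\<in>S. d s w \<le> t)"
  unfolding cech_simplex_def by (auto simp: in_mcball)

lemma bex_wedge_carrier_iff:
  "(\<exists>w\<in>wedge_carrier C Y star. P w) \<longleftrightarrow> (\<exists>z\<in>C. P (Inl z)) \<or> (\<exists>w\<in>Y - {star}. P (Inr w))"
  unfolding wedge_carrier_def by blast

lemma cech_simplex_wedge_iff:
  assumes "Metric_space C dC" "theta \<in> C" "Metric_space Y dY" "star \<in> Y" "p \<ge> 1"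
    and "finite \<sigma>" "\<sigma> \<subseteq> C" "finite \<tau>" "\<tau> \<subseteq> Y - {star}"
  shows "cech_simplex (wedge_carrier C Y star) (wedge_dist p dC theta dY star) t (Inl ` \<sigma> \<union> Inr ` \<tau>)
     \<longleftrightarrow> (\<exists>z\<in>C. (\<forall>x\<in>\<sigma>. dC x z \<le> t) \<and> (\<forall>y\<in>\<tau>. lp_norm2 p (dC z theta) (dY y star) \<le> t))
       \<or> (\<exists>w\<in>Y - {star}. (\<forall>y\<in>\<tau>. dY y w \<le> t) \<and> (\<forall>x\<in>\<sigma>. lp_norm2 p (dC x theta) (dY w star) \<le> t))"
proof -
  interpret W: Metric_space "wedge_carrier C Y star" "wedge_dist p dC theta dY star"
    using assms(1-5) by (rule Metric_space_wedge)
  have "Inl ` \<sigma> \<union> Inr ` \<tau> \<subseteq> wedge_carrier C Y star"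
    using assms(7,9) by auto
  with assms(6,8) show ?thesis
    unfolding W.cech_simplex_iff bex_wedge_carrier_iff by (simp add: ball_Un conj_commute)
qed

theorem proposition6p24:
  fixes C :: "'a set" and dC :: "'a \<Rightarrow> 'a \<Rightarrow> real" and theta :: 'a
    and Y :: "'b set" and dY :: "'b \<Rightarrow> 'b \<Rightarrow> real" and star :: 'b
    and p :: ereal and t :: real and \<sigma> :: "'a set" and \<tau> :: "'b set"
  assumes "Metric_space C dC" and "theta \<in> C"
    and "Metric_space Y dY" and "star \<in> Y"
    and "p \<ge> 1"
    and "t \<ge> 0"
    and "finite \<sigma>" and "\<sigma> \<noteq> {}" and "\<sigma> \<subseteq> C"
    and "finite \<tau>" and "\<tau> \<noteq> {}" and "\<tau> \<subseteq> Y - {star}"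
  shows "cech_simplex (wedge_carrier C Y star) (wedge_dist p dC theta dY star) t
            (Inl ` \<sigma> \<union> Inr ` \<tau>)
     \<longleftrightarrow>
         (\<exists>z\<in>C. (\<forall>x\<in>\<sigma>. z \<in> Metric_space.mcball C dC x t) \<and>
                 lp_norm2 p (dC z theta) (Max ((\<lambda>y. dY y star) ` \<tau>)) \<le> t)
       \<or> (\<exists>w\<in>Y. (\<forall>y\<in>\<tau>. w \<in> Metric_space.mcball Y dY y t) \<and>
                 lp_norm2 p (Max ((\<lambda>x. dC x theta) ` \<sigma>)) (dY w star) \<le> t)"
proof -
  interpret C: Metric_space C dC by fact
  interpret Y: Metric_space Y dY by fact
  define QC where "QC z \<longleftrightarrow> (\<forall>x\<in>\<sigma>. dC x z \<le> t) \<and> (\<forall>y\<in>\<tau>. lp_norm2 p (dC z theta) (dY y star) \<le> t)"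
    for z
  define QY where "QY w \<longleftrightarrow> (\<forall>y\<in>\<tau>. dY y w \<le> t) \<and> (\<forall>x\<in>\<sigma>. lp_norm2 p (dC x theta) (dY w star) \<le> t)"
    for w
  have basepoint: "QC theta" if "QY star"
    using that \<open>p \<ge> 1\<close> \<open>theta \<in> C\<close> \<open>star \<in> Y\<close>
    by (auto simp: QC_def QY_def lp_norm2_zero_left lp_norm2_zero_right C.nonneg)
  have "cech_simplex (wedge_carrier C Y star) (wedge_dist p dC theta dY star) t (Inl ` \<sigma> \<union> Inr ` \<tau>)
        \<longleftrightarrow> (\<exists>z\<in>C. QC z) \<or> (\<exists>w\<in>Y. QY w)"
    using cech_simplex_wedge_iff[OF assms(1-5,7,9,10,12)] \<open>theta \<in> C\<close> basepoint
    unfolding QC_def QY_def by blast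
  moreover have "QC z \<longleftrightarrow> (\<forall>x\<in>\<sigma>. z \<in> C.mcball x t) \<and>
                   lp_norm2 p (dC z theta) (Max ((\<lambda>y. dY y star) ` \<tau>)) \<le> t" if "z \<in> C" for z
    using that assms lp_norm2_Max_right_le_iff[of p \<tau> "\<lambda>y. dY y star" "dC z theta" t]
    by (auto simp: QC_def)
  moreover have "QY w \<longleftrightarrow> (\<forall>y\<in>\<tau>. w \<in> Y.mcball y t) \<and>
                   lp_norm2 p (Max ((\<lambda>x. dC x theta) ` \<sigma>)) (dY w star) \<le> t" if "w \<in> Y" for w
    using that assms lp_norm2_Max_left_le_iff[of p \<sigma> "\<lambda>x. dC x theta" "dY w star" t]
    by (auto simp: QY_def)
  ultimately show ?thesis by meson
qed

end
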